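(* Let $S$ be the three-vertex tree with root $a$, whose right child is $b$, where $b$ has a left child $c$ (preorder $132$), with both edges contiguous. Let $(P,e)$ be any tree pattern. Let $Q$ and $Q'$ be obtained from $S$ by attaching $(P,e)$ via a non-contiguous edge as the right subtree of the leaf $c$, respectively as the right subtree of the middle vertex $b$. Then $Q$ and $Q'$ are Wilf-equivalent.
   Context: $\mathcal{T}_n$ is the set of binary trees on $n$ vertices labeled $1,\dots,n$ by the search tree property (labels of combined trees reassigned by this property). $c_L,c_R,p$: left child, right child, parent. A tree pattern is $(P,e)$, $P\in\mathcal{T}_k$, $e\colon[k]\setminus\{\text{root}\}\to\{0,1\}$; edge $(i,p(i))$ is contiguous if $e(i)=1$, non-contiguous if $e(i)=0$. $T\in\mathcal{T}_n$ contains $(P,e)$ if there is an injection $f\colon[k]\to[n]$ such that for every non-root $i$ of $P$: if $e(i)=1$, $f(i)$ is the left (resp. right) child of $f(p(i))$ when $i$ is the left (resp. right) child of $p(i)$; if $e(i)=0$, $f(i)$ lies in the left (resp. right) subtree of $f(p(i))$. $\mathcal{T}_n(Q)$ is the set of avoiders of $Q$. $Q,Q'$ are Wilf-equivalent if $|\mathcal{T}_n(Q)|=|\mathcal{T}_n(Q')|$ for all $n\ge0$. *)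

theory Defs
  imports "HOL-Library.Tree"
begin

text \<open>Binary trees on n vertices with the search-tree labelling are in bijection with
  unlabelled binary tree shapes of size n (the labelling is forced); we use
  unit tree from HOL-Library.Tree.\<close>

datatype pat = PNode child child
     and child = NoChild | Cont pat | NonCont pat

primrec matches :: "pat \<Rightarrow> unit tree \<Rightarrow> bool"
  and cmatch :: "child \<Rightarrow> unit tree \<Rightarrow> bool" where
  "matches (PNode a b) t = (case t of Leaf \<Rightarrow> False | Node l _ r \<Rightarrow> cmatch a l \<and> cmatch b r)"
| "cmatch NoChild t = True"
| "cmatch (Cont p) t = matches p t"
| "cmatch (NonCont p) t = (\<exists>s\<in>subtrees t. matches p s)"

definition contains :: "unit tree \<Rightarrow> pat \<Rightarrow> bool" where
  "contains t p = (\<exists>s\<in>subtrees t. matches p s)"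

definition avoiders :: "nat \<Rightarrow> pat \<Rightarrow> unit tree set" where
  "avoiders n Q = {t. size t = n \<and> \<not> contains t Q}"

definition wilf_equiv :: "pat \<Rightarrow> pat \<Rightarrow> bool" where
  "wilf_equiv Q Q' = (\<forall>n. card (avoiders n Q) = card (avoiders n Q'))"

end

theory Submission
  imports Defs "HOL-Computational_Algebra.Formal_Power_Series"
begin

text \<open>A pattern whose root has only a contiguous right child \<open>R\<close> is avoided exactly when no
  node has a right subtree matched by \<open>R\<close>. For both \<open>Q\<close> and \<open>Q'\<close>, let \<open>A\<close> count the
  avoiders, \<open>B\<close> the avoiders that may serve as a right subtree, \<open>D\<close> those among them
  containing \<open>P\<close>, and \<open>N\<close> the trees avoiding \<open>P\<close>. Splitting at the root gives
  \<open>A = 1 + xAB\<close>, \<open>B = D + N\<close>, and \<open>A = B + E\<close> where \<open>E\<close> counts avoiders whose root is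
  hit. For \<open>Q\<close> one finds \<open>E = x (xAD) B\<close>, for \<open>Q'\<close> \<open>E = x (xAB) D\<close>: the same series.
  This system determines \<open>A\<close> from \<open>N\<close> coefficient by coefficient.\<close>

unbundle fps_syntax

lemma fps_cutoff_mult_cong:
  assumes "fps_cutoff n f = fps_cutoff n f'" and "fps_cutoff n g = fps_cutoff n g'"
  shows "fps_cutoff n (f * g) = fps_cutoff n (f' * g')"
  using assms by (auto simp: fps_cutoff_eq_fps_cutoff_iff fps_mult_nth intro!: sum.cong)

lemma fps_cutoff_Suc_X_mult_cong:
  fixes f f' :: "'a::comm_semiring_1 fps"
  assumes "fps_cutoff n f = fps_cutoff n f'"
  shows "fps_cutoff (Suc n) (fps_X * f) = fps_cutoff (Suc n) (fps_X * f')"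
  using assms by (auto simp: fps_cutoff_eq_fps_cutoff_iff)

lemma fps_cutoff_Suc_imp_fps_cutoff:
  "fps_cutoff (Suc n) f = fps_cutoff (Suc n) g \<Longrightarrow> fps_cutoff n f = fps_cutoff n g"
  by (simp add: fps_cutoff_eq_fps_cutoff_iff)

definition avoider_system :: "'a::comm_semiring_1 fps \<Rightarrow> 'a fps \<Rightarrow> bool" where
  "avoider_system N A \<longleftrightarrow>
     (\<exists>B D. A = 1 + fps_X * A * B \<and> A = B + fps_X\<^sup>2 * A * B * D \<and> B = D + N)"

lemma avoider_system_unique:
  fixes N :: "'a::comm_semiring_1_cancel fps"
  assumes "avoider_system N A" and "avoider_system N A'"
  shows "A = A'"
proof -
  obtain B D where A: "A = 1 + fps_X * (A * B)" and E: "A = B + fps_X * (fps_X * (A * B * D))"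
    and B: "B = D + N"
    using assms(1) by (auto simp: avoider_system_def power2_eq_square mult.assoc)
  obtain B' D' where A': "A' = 1 + fps_X * (A' * B')"
    and E': "A' = B' + fps_X * (fps_X * (A' * B' * D'))" and B': "B' = D' + N"
    using assms(2) by (auto simp: avoider_system_def power2_eq_square mult.assoc)
  have "fps_cutoff n A = fps_cutoff n A' \<and> fps_cutoff n B = fps_cutoff n B'
      \<and> fps_cutoff n D = fps_cutoff n D'" for n
  proof (induction n)
    case 0
    show ?case by simp
  next
    \<comment> \<open>Agreement below \<open>n\<close> yields agreement at \<open>n\<close>: for \<open>A\<close> by the first equation, then
      for \<open>B\<close> by cancelling in the second, then for \<open>D\<close> by cancelling in the third.\<close>
    case (Suc n)
    then have AB: "fps_cutoff n (A * B) = fps_cutoff n (A' * B')"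
      and ABD: "fps_cutoff n (A * B * D) = fps_cutoff n (A' * B' * D')"
      by (blast intro: fps_cutoff_mult_cong)+
    have "fps_cutoff (Suc n) A = fps_cutoff (Suc n) (1 + fps_X * (A * B))"
      using A by (rule arg_cong)
    also have "\<dots> = fps_cutoff (Suc n) (1 + fps_X * (A' * B'))"
      by (simp only: fps_cutoff_add fps_cutoff_Suc_X_mult_cong[OF AB])
    also have "\<dots> = fps_cutoff (Suc n) A'"
      using A' by (rule arg_cong[symmetric])
    finally have cutoff_A: "fps_cutoff (Suc n) A = fps_cutoff (Suc n) A'" .
    have "fps_cutoff (Suc n) B + fps_cutoff (Suc n) (fps_X * (fps_X * (A * B * D)))
        = fps_cutoff (Suc n) A"
      using arg_cong[OF E, of "fps_cutoff (Suc n)"] by (simp only: fps_cutoff_add)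
    also have "\<dots> = fps_cutoff (Suc n) A'"
      by (fact cutoff_A)
    also have "\<dots> = fps_cutoff (Suc n) B' + fps_cutoff (Suc n) (fps_X * (fps_X * (A' * B' * D')))"
      using arg_cong[OF E', of "fps_cutoff (Suc n)"] by (simp only: fps_cutoff_add)
    also have "\<dots> = fps_cutoff (Suc n) B' + fps_cutoff (Suc n) (fps_X * (fps_X * (A * B * D)))"
      using fps_cutoff_Suc_X_mult_cong[OF fps_cutoff_Suc_imp_fps_cutoff[OF
          fps_cutoff_Suc_X_mult_cong[OF ABD]]]
      by (simp only:)
    finally have cutoff_B: "fps_cutoff (Suc n) B = fps_cutoff (Suc n) B'"
      by (rule add_right_imp_eq)
    have "fps_cutoff (Suc n) D + fps_cutoff (Suc n) N = fps_cutoff (Suc n) D' + fps_cutoff (Suc n) N"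
      using cutoff_B by (simp only: B B' fps_cutoff_add)
    then have "fps_cutoff (Suc n) D = fps_cutoff (Suc n) D'"
      by (rule add_right_imp_eq)
    with cutoff_A cutoff_B show ?case by blast
  qed
  then show ?thesis
    by (metis fps_ext fps_cutoff_eq_fps_cutoff_iff lessI)
qed

lemma finite_unit_trees_size_le: "finite {t::unit tree. size t \<le> n}"
proof (induction n)
  case 0
  have "{t::unit tree. size t \<le> 0} = {Leaf}" by auto
  then show ?case by simp
next
  case (Suc n)
  have "{t::unit tree. size t \<le> Suc n}
      \<subseteq> insert Leaf ((\<lambda>(l, r). Node l () r) ` ({t. size t \<le> n} \<times> {t. size t \<le> n}))"
  proof
    fix t :: "unit tree"
    assume "t \<in> {t. size t \<le> Suc n}"
    then show "t \<in> insert Leaf ((\<lambda>(l, r). Node l () r) ` ({t. size t \<le> n} \<times> {t. size t \<le> n}))"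
      by (cases t) (auto simp: image_iff)
  qed
  then show ?case using Suc finite_subset by blast
qed

lemma finite_unit_trees_size_eq: "finite {t::unit tree. size t = n \<and> F t}"
  by (rule finite_subset[OF _ finite_unit_trees_size_le[of n]]) auto

definition tree_gf :: "(unit tree \<Rightarrow> bool) \<Rightarrow> nat fps" where
  "tree_gf F = Abs_fps (\<lambda>n. card {t. size t = n \<and> F t})"

lemma wilf_equiv_iff_tree_gf_eq:
  "wilf_equiv Q Q' \<longleftrightarrow> tree_gf (\<lambda>t. \<not> contains t Q) = tree_gf (\<lambda>t. \<not> contains t Q')"
  by (simp add: wilf_equiv_def avoiders_def tree_gf_def fps_eq_iff)

lemma tree_gf_Leaf: "tree_gf (\<lambda>t. t = Leaf) = 1"
proof (rule fps_ext)
  fix n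
  have "{t::unit tree. size t = n \<and> t = Leaf} = (if n = 0 then {Leaf} else {})"
    by auto
  then show "tree_gf (\<lambda>t. t = Leaf) $ n = 1 $ n"
    by (simp add: tree_gf_def)
qed

lemma tree_gf_disj:
  assumes "\<And>t. \<not> (F t \<and> G t)"
  shows "tree_gf (\<lambda>t. F t \<or> G t) = tree_gf F + tree_gf G"
proof (rule fps_ext)
  fix n
  have "{t. size t = n \<and> (F t \<or> G t)} = {t. size t = n \<and> F t} \<union> {t. size t = n \<and> G t}"
    by auto
  then show "tree_gf (\<lambda>t. F t \<or> G t) $ n = (tree_gf F + tree_gf G) $ n"
    using assms by (simp add: tree_gf_def card_Un_disjoint finite_unit_trees_size_eq disjoint_iff)
qed

lemma tree_gf_Node:
  "tree_gf (\<lambda>t. \<exists>l r. t = Node l () r \<and> F l \<and> G r) = fps_X * tree_gf F * tree_gf G"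
proof (rule fps_ext)
  fix n
  let ?T = "\<lambda>H k. {t. size t = k \<and> H t}"
  show "tree_gf (\<lambda>t. \<exists>l r. t = Node l () r \<and> F l \<and> G r) $ n = (fps_X * tree_gf F * tree_gf G) $ n"
  proof (cases n)
    case 0
    then show ?thesis by (simp add: tree_gf_def)
  next
    case (Suc m)
    have "?T (\<lambda>t. \<exists>l r. t = Node l () r \<and> F l \<and> G r) (Suc m)
        = (\<Union>k\<le>m. (\<lambda>(l, r). Node l () r) ` (?T F k \<times> ?T G (m - k)))"
      by (auto simp: image_iff)
    also have "card \<dots> = (\<Sum>k\<le>m. card ((\<lambda>(l, r). Node l () r) ` (?T F k \<times> ?T G (m - k))))"
      by (rule card_UN_disjoint) (auto simp: finite_unit_trees_size_eq)
    also have "\<dots> = (\<Sum>k\<le>m. card (?T F k) * card (?T G (m - k)))"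
      by (simp add: card_image inj_on_def card_cartesian_product)
    also have "\<dots> = (tree_gf F * tree_gf G) $ m"
      by (simp add: tree_gf_def fps_mult_nth atLeast0AtMost)
    also have "\<dots> = (fps_X * tree_gf F * tree_gf G) $ Suc m"
      by (simp add: mult.assoc)
    finally show ?thesis
      using Suc by (simp add: tree_gf_def)
  qed
qed

lemma matches_Leaf [simp]: "\<not> matches p Leaf"
  by (cases p) simp

lemma contains_Leaf [simp]: "\<not> contains Leaf p"
  by (simp add: contains_def)

lemma contains_Node:
  "contains (Node l x r) p \<longleftrightarrow> matches p (Node l x r) \<or> contains l p \<or> contains r p"
  by (auto simp: contains_def)

fun no_right_subtree :: "(unit tree \<Rightarrow> bool) \<Rightarrow> unit tree \<Rightarrow> bool" where
  "no_right_subtree Y Leaf = True"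
| "no_right_subtree Y (Node l _ r) \<longleftrightarrow> no_right_subtree Y l \<and> no_right_subtree Y r \<and> \<not> Y r"

lemma not_contains_right_pattern:
  "\<not> contains t (PNode NoChild (Cont R)) \<longleftrightarrow> no_right_subtree (matches R) t"
  by (induction t) (auto simp: contains_Node)

lemma no_right_subtree_if_not_contains:
  assumes "\<And>t. Y t \<Longrightarrow> contains t P" and "\<not> contains t P"
  shows "no_right_subtree Y t \<and> \<not> Y t"
  using assms(2) by (induction t) (auto simp: contains_Node dest: assms(1))

lemma tree_gf_no_right_subtree:
  "tree_gf (no_right_subtree Y)
     = 1 + fps_X * tree_gf (no_right_subtree Y) * tree_gf (\<lambda>t. no_right_subtree Y t \<and> \<not> Y t)"
proof -
  have "tree_gf (no_right_subtree Y) = tree_gf (\<lambda>t. t = Leaf \<or>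
      (\<exists>l r. t = Node l () r \<and> no_right_subtree Y l \<and> (no_right_subtree Y r \<and> \<not> Y r)))"
  proof (rule arg_cong[where f = tree_gf], rule ext)
    fix t
    show "no_right_subtree Y t \<longleftrightarrow> t = Leaf \<or>
        (\<exists>l r. t = Node l () r \<and> no_right_subtree Y l \<and> (no_right_subtree Y r \<and> \<not> Y r))"
      by (cases t) auto
  qed
  also have "\<dots> = 1 + fps_X * tree_gf (no_right_subtree Y) * tree_gf (\<lambda>t. no_right_subtree Y t \<and> \<not> Y t)"
    by (subst tree_gf_disj) (auto simp: tree_gf_Leaf tree_gf_Node)
  finally show ?thesis .
qed

lemma avoider_system_no_right_subtree:
  assumes contains_P: "\<And>t. Y t \<Longrightarrow> contains t P"
    and hits: "tree_gf (\<lambda>t. no_right_subtree Y t \<and> Y t)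
      = fps_X\<^sup>2 * tree_gf (no_right_subtree Y) * tree_gf (\<lambda>t. no_right_subtree Y t \<and> \<not> Y t)
          * tree_gf (\<lambda>t. no_right_subtree Y t \<and> \<not> Y t \<and> contains t P)"
  shows "avoider_system (tree_gf (\<lambda>t. \<not> contains t P)) (tree_gf (no_right_subtree Y))"
  unfolding avoider_system_def
proof (intro exI conjI)
  show "tree_gf (no_right_subtree Y)
      = 1 + fps_X * tree_gf (no_right_subtree Y) * tree_gf (\<lambda>t. no_right_subtree Y t \<and> \<not> Y t)"
    by (rule tree_gf_no_right_subtree)
  have "tree_gf (no_right_subtree Y)
      = tree_gf (\<lambda>t. (no_right_subtree Y t \<and> \<not> Y t) \<or> (no_right_subtree Y t \<and> Y t))"
    by (rule arg_cong[where f = tree_gf]) blast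
  also have "\<dots> = tree_gf (\<lambda>t. no_right_subtree Y t \<and> \<not> Y t) + tree_gf (\<lambda>t. no_right_subtree Y t \<and> Y t)"
    by (rule tree_gf_disj) blast
  finally show "tree_gf (no_right_subtree Y) = tree_gf (\<lambda>t. no_right_subtree Y t \<and> \<not> Y t)
      + fps_X\<^sup>2 * tree_gf (no_right_subtree Y) * tree_gf (\<lambda>t. no_right_subtree Y t \<and> \<not> Y t)
          * tree_gf (\<lambda>t. no_right_subtree Y t \<and> \<not> Y t \<and> contains t P)"
    by (simp only: hits)
  have "tree_gf (\<lambda>t. no_right_subtree Y t \<and> \<not> Y t)
      = tree_gf (\<lambda>t. (no_right_subtree Y t \<and> \<not> Y t \<and> contains t P) \<or> \<not> contains t P)"
    using no_right_subtree_if_not_contains[OF contains_P] by (intro arg_cong[where f = tree_gf]) blast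
  also have "\<dots> = tree_gf (\<lambda>t. no_right_subtree Y t \<and> \<not> Y t \<and> contains t P)
      + tree_gf (\<lambda>t. \<not> contains t P)"
    by (rule tree_gf_disj) blast
  finally show "tree_gf (\<lambda>t. no_right_subtree Y t \<and> \<not> Y t)
      = tree_gf (\<lambda>t. no_right_subtree Y t \<and> \<not> Y t \<and> contains t P) + tree_gf (\<lambda>t. \<not> contains t P)" .
qed

lemma matches_left_child_with_P_right_iff:
  "matches (PNode (Cont (PNode NoChild (NonCont P))) NoChild) t
     \<longleftrightarrow> (\<exists>z y. t = Node z () y \<and> (\<exists>zl zr. z = Node zl () zr \<and> contains zr P))"
  by (auto simp: contains_def split: tree.splits)

lemma matches_left_child_and_P_right_iff:
  "matches (PNode (Cont (PNode NoChild NoChild)) (NonCont P)) t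
     \<longleftrightarrow> (\<exists>z y. t = Node z () y \<and> z \<noteq> Leaf \<and> contains y P)"
  by (auto simp: contains_def split: tree.splits)

lemma tree_gf_hits_left_child_with_P_right:
  fixes P :: pat
  defines "Y \<equiv> matches (PNode (Cont (PNode NoChild (NonCont P))) NoChild)"
  shows "tree_gf (\<lambda>t. no_right_subtree Y t \<and> Y t)
      = fps_X\<^sup>2 * tree_gf (no_right_subtree Y) * tree_gf (\<lambda>t. no_right_subtree Y t \<and> \<not> Y t)
          * tree_gf (\<lambda>t. no_right_subtree Y t \<and> \<not> Y t \<and> contains t P)"
proof -
  have Y_iff: "Y t \<longleftrightarrow> (\<exists>z y. t = Node z () y \<and> (\<exists>zl zr. z = Node zl () zr \<and> contains zr P))"
    for t unfolding Y_def by (rule matches_left_child_with_P_right_iff)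
  have "tree_gf (\<lambda>t. no_right_subtree Y t \<and> Y t) = tree_gf (\<lambda>t. \<exists>z y. t = Node z () y
      \<and> (\<exists>zl zr. z = Node zl () zr \<and> no_right_subtree Y zl
            \<and> (no_right_subtree Y zr \<and> \<not> Y zr \<and> contains zr P))
      \<and> (no_right_subtree Y y \<and> \<not> Y y))"
    by (rule arg_cong[where f = tree_gf]) (auto simp: Y_iff)
  also have "\<dots> = fps_X * (fps_X * tree_gf (no_right_subtree Y)
        * tree_gf (\<lambda>t. no_right_subtree Y t \<and> \<not> Y t \<and> contains t P))
      * tree_gf (\<lambda>t. no_right_subtree Y t \<and> \<not> Y t)"
    by (simp only: tree_gf_Node)
  finally show ?thesis
    by (simp add: power2_eq_square mult_ac)
qed

lemma tree_gf_hits_left_child_and_P_right: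
  fixes P :: pat
  defines "Y \<equiv> matches (PNode (Cont (PNode NoChild NoChild)) (NonCont P))"
  shows "tree_gf (\<lambda>t. no_right_subtree Y t \<and> Y t)
      = fps_X\<^sup>2 * tree_gf (no_right_subtree Y) * tree_gf (\<lambda>t. no_right_subtree Y t \<and> \<not> Y t)
          * tree_gf (\<lambda>t. no_right_subtree Y t \<and> \<not> Y t \<and> contains t P)"
proof -
  have Y_iff: "Y t \<longleftrightarrow> (\<exists>z y. t = Node z () y \<and> z \<noteq> Leaf \<and> contains y P)"
    for t unfolding Y_def by (rule matches_left_child_and_P_right_iff)
  have "tree_gf (\<lambda>t. no_right_subtree Y t \<and> Y t) = tree_gf (\<lambda>t. \<exists>z y. t = Node z () y
      \<and> (\<exists>l r. z = Node l () r \<and> no_right_subtree Y l \<and> (no_right_subtree Y r \<and> \<not> Y r))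
      \<and> (no_right_subtree Y y \<and> \<not> Y y \<and> contains y P))"
    by (rule arg_cong[where f = tree_gf]) (auto simp: Y_iff neq_Leaf_iff)
  also have "\<dots> = fps_X * (fps_X * tree_gf (no_right_subtree Y)
        * tree_gf (\<lambda>t. no_right_subtree Y t \<and> \<not> Y t))
      * tree_gf (\<lambda>t. no_right_subtree Y t \<and> \<not> Y t \<and> contains t P)"
    by (simp only: tree_gf_Node)
  finally show ?thesis
    by (simp add: power2_eq_square mult_ac)
qed

theorem lemma21:
  fixes P :: pat
  shows "wilf_equiv
     (PNode NoChild (Cont (PNode (Cont (PNode NoChild (NonCont P))) NoChild)))
     (PNode NoChild (Cont (PNode (Cont (PNode NoChild NoChild)) (NonCont P))))"
proof -
  let ?Y = "matches (PNode (Cont (PNode NoChild (NonCont P))) NoChild)"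
  let ?Y' = "matches (PNode (Cont (PNode NoChild NoChild)) (NonCont P))"
  have "avoider_system (tree_gf (\<lambda>t. \<not> contains t P)) (tree_gf (no_right_subtree ?Y))"
    by (rule avoider_system_no_right_subtree[OF _ tree_gf_hits_left_child_with_P_right])
      (auto simp del: matches.simps simp: matches_left_child_with_P_right_iff contains_Node)
  moreover have "avoider_system (tree_gf (\<lambda>t. \<not> contains t P)) (tree_gf (no_right_subtree ?Y'))"
    by (rule avoider_system_no_right_subtree[OF _ tree_gf_hits_left_child_and_P_right])
      (auto simp del: matches.simps simp: matches_left_child_and_P_right_iff contains_Node)
  ultimately have "tree_gf (no_right_subtree ?Y) = tree_gf (no_right_subtree ?Y')"
    by (rule avoider_system_unique)
  then show ?thesis
    by (simp add: wilf_equiv_iff_tree_gf_eq not_contains_right_pattern)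
qed

end
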